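(* For $0<a_-<a_+<1$, $$\int\log x\ \pi_{a_-,a_+}(dx)=\frac{\sigma_+\log\sigma_++\sigma_-\log\sigma_--(\sigma_++\sigma_--1)\log(\sigma_++\sigma_--1)}{1-\sigma_+},$$ where $\sigma_\pm=\sigma_\pm(a_-,a_+)$.
   Context: For $(b,c)\in(0,1)^2$, $\sigma_\pm(b,c)=\frac12\big[1+\sqrt{bc}\pm\sqrt{(1-b)(1-c)}\big]$. For $0<a_-<a_+<1$, $\pi_{a_-,a_+}(dx)=C_{a_-,a_+}\frac{\sqrt{(x-a_-)(a_+-x)}}{2\pi x(1-x)}\mathbf 1_{[a_-,a_+]}(x)dx$ (generalized McKay distribution), with normalization $C_{a_-,a_+}^{-1}=\frac12\big[1-\sqrt{a_-a_+}-\sqrt{(1-a_-)(1-a_+)}\big]$. *)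

theory Defs
  imports "HOL-Probability.Probability"
begin

definition sigma_plus :: "real \<Rightarrow> real \<Rightarrow> real" where
  "sigma_plus b c = (1 + sqrt (b * c) + sqrt ((1 - b) * (1 - c))) / 2"

definition sigma_minus :: "real \<Rightarrow> real \<Rightarrow> real" where
  "sigma_minus b c = (1 + sqrt (b * c) - sqrt ((1 - b) * (1 - c))) / 2"

definition mckay_const :: "real \<Rightarrow> real \<Rightarrow> real" where
  "mckay_const am ap = 1 / ((1 - sqrt (am * ap) - sqrt ((1 - am) * (1 - ap))) / 2)"

definition mckay_density :: "real \<Rightarrow> real \<Rightarrow> real \<Rightarrow> real" where
  "mckay_density am ap x =
     mckay_const am ap * sqrt ((x - am) * (ap - x)) / (2 * pi * x * (1 - x))
     * indicator {am..ap} x"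

definition mckay :: "real \<Rightarrow> real \<Rightarrow> real measure" where
  "mckay am ap = density lborel (\<lambda>x. ennreal (mckay_density am ap x))"

end

(*
  Since ln x = (x - 1) * (INT t:0..1. 1 / (1 - t + t x)), exchanging the order of integration
  reduces the log-moment to a t-integral of Stieltjes transforms of the weight sqrt((x-a)(b-x)),
  which are elementary:
    INT x:a..b. sqrt((x-a)(b-x)) / (x - p) = pi ((a+b)/2 - p - sqrt((a-p)(b-p)))   for p < a.
  What remains is INT t:0..1. (1 - t + sqrt(ab) t - R t) / (t (1-t)) with
  R t = sqrt((1-t+ta)(1-t+tb)) the square root of a quadratic.  Splitting R/(t(1-t)) into
  partial fractions, each piece has a logarithmic primitive (Euler substitution); evaluated at
  t = 0 and t = 1 the logarithms factor through sigma_+ and sigma_-, because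
  4 sigma_+ sigma_- = a + b + 2 sqrt(ab) and sigma_+ + sigma_- - 1 = sqrt(ab).
  Finally 1 / C = 1 - sigma_+.
*)
theory Submission
  imports Defs
begin

lemma has_real_derivative_ln_sqrt_quadratic_recip:
  fixes c \<beta> \<alpha> x :: real
  defines "R \<equiv> \<lambda>x. sqrt (c + \<beta> * x + \<alpha> * x\<^sup>2)"
  assumes "0 < c" "x \<noteq> 0" "0 < c + \<beta> * x + \<alpha> * x\<^sup>2" "0 < 2 * c + \<beta> * x + 2 * sqrt c * R x"
  shows "((\<lambda>x. ln (2 * c + \<beta> * x + 2 * sqrt c * R x)) has_real_derivative
           1 / x - sqrt c / (x * R x)) (at x)"
proof -
  define N where "N = 2 * c + \<beta> * x + 2 * sqrt c * R x"
  define D where "D = \<beta> + 2 * sqrt c * ((\<beta> + 2 * \<alpha> * x) / (2 * R x))"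
  have R_pos: "0 < R x" and R_sq: "(R x)\<^sup>2 = c + \<beta> * x + \<alpha> * x\<^sup>2"
    using assms(4) by (simp_all add: R_def)
  have sqrt_c: "(sqrt c)\<^sup>2 = c" using assms(2) by simp
  have deriv: "((\<lambda>x. ln (2 * c + \<beta> * x + 2 * sqrt c * R x)) has_real_derivative D / N) (at x)"
    using assms(4,5) unfolding R_def N_def D_def
    by (auto intro!: derivative_eq_intros simp: power2_eq_square field_simps)
  have "D = N * (R x - sqrt c) / (x * R x)"
    using R_pos assms(3) apply (simp add: D_def N_def field_simps)
    using R_sq sqrt_c by algebra
  then have "D / N = 1 / x - sqrt c / (x * R x)"
    using R_pos assms(3,5) by (simp add: N_def field_simps)
  with deriv show ?thesis by simp
qed

lemma has_real_derivative_ln_sqrt_quadratic: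
  fixes c \<beta> \<alpha> x :: real
  defines "R \<equiv> \<lambda>x. sqrt (c + \<beta> * x + \<alpha> * x\<^sup>2)"
  assumes "0 \<le> \<alpha>" "0 < c + \<beta> * x + \<alpha> * x\<^sup>2" "0 < 2 * sqrt \<alpha> * R x + 2 * \<alpha> * x + \<beta>"
  shows "((\<lambda>x. ln (2 * sqrt \<alpha> * R x + 2 * \<alpha> * x + \<beta>)) has_real_derivative sqrt \<alpha> / R x) (at x)"
proof -
  define N where "N = 2 * sqrt \<alpha> * R x + 2 * \<alpha> * x + \<beta>"
  define D where "D = 2 * sqrt \<alpha> * ((\<beta> + 2 * \<alpha> * x) / (2 * R x)) + 2 * \<alpha>"
  have R_pos: "0 < R x" using assms(3) by (simp add: R_def)
  have deriv: "((\<lambda>x. ln (2 * sqrt \<alpha> * R x + 2 * \<alpha> * x + \<beta>)) has_real_derivative D / N) (at x)"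
    using assms(3,4) unfolding R_def N_def D_def
    by (auto intro!: derivative_eq_intros simp: power2_eq_square field_simps)
  have "D = sqrt \<alpha> * N / R x"
    using R_pos assms(2) by (simp add: D_def N_def field_simps)
  then have "D / N = sqrt \<alpha> / R x"
    using R_pos assms(4) by (simp add: N_def)
  with deriv show ?thesis by simp
qed

lemma has_real_derivative_reflect:
  fixes f :: "real \<Rightarrow> real"
  assumes "(f has_real_derivative D) (at (1 - t))"
  shows "((\<lambda>t. f (1 - t)) has_real_derivative - D) (at t)"
proof -
  have "((\<lambda>t. 1 - t) has_real_derivative -1) (at t)"
    by (auto intro!: derivative_eq_intros)
  from DERIV_chain2[OF _ this] assms show ?thesis by simp
qed

lemma interp_pos: "0 < x \<Longrightarrow> t \<in> {0..1} \<Longrightarrow> 0 < 1 - t + t * (x::real)"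
  by (cases "t = 1") (auto simp: add_pos_nonneg)

definition interp_gmean :: "real \<Rightarrow> real \<Rightarrow> real \<Rightarrow> real" where
  "interp_gmean a b t = sqrt ((1 - t + t * a) * (1 - t + t * b))"

(* One Euler-substitution logarithm for each partial fraction of
   R / (t (1 - t)) = 1 / (t R) + a b / ((1 - t) R) - (1 - a) (1 - b) / R,  R = interp_gmean a b t;
   the last two are taken in the variable 1 - t. *)
definition ln_moment_primitive :: "real \<Rightarrow> real \<Rightarrow> real \<Rightarrow> real" where
  "ln_moment_primitive a b t =
     ln (2 + (a + b - 2) * t + 2 * interp_gmean a b t)
     - sqrt (a * b) * ln (2 * (a * b) + (a + b - 2 * a * b) * (1 - t) + 2 * sqrt (a * b) * interp_gmean a b t)
     - sqrt ((1 - a) * (1 - b)) * ln (2 * sqrt ((1 - a) * (1 - b)) * interp_gmean a b t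
                                      + 2 * ((1 - a) * (1 - b)) * (1 - t) + (a + b - 2 * a * b))"

lemma interp_gmean_pos: "0 < a \<Longrightarrow> 0 < b \<Longrightarrow> t \<in> {0..1} \<Longrightarrow> 0 < interp_gmean a b t"
  using interp_pos[of a t] interp_pos[of b t] by (simp add: interp_gmean_def)

lemma interp_gmean_eq_quadratic:
  "interp_gmean a b t = sqrt (1 + (a + b - 2) * t + ((1 - a) * (1 - b)) * t\<^sup>2)"
  "interp_gmean a b t = sqrt (a * b + (a + b - 2 * a * b) * (1 - t) + ((1 - a) * (1 - b)) * (1 - t)\<^sup>2)"
  by (simp_all add: interp_gmean_def power2_eq_square algebra_simps)

lemma ln_moment_integrand_partial_fractions:
  fixes a b t R g h :: real
  assumes R_sq: "R\<^sup>2 = (1 - t + t * a) * (1 - t + t * b)"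
    and g_sq: "g\<^sup>2 = a * b" and h_sq: "h\<^sup>2 = (1 - a) * (1 - b)"
    and nz: "t \<noteq> 0" "t \<noteq> 1" "R \<noteq> 0"
  shows "(1 / t - 1 / (t * R)) - g * - (1 / (1 - t) - g / ((1 - t) * R)) - h * - (h / R)
           = (1 - t + g * t - R) / (t * (1 - t))"
proof -
  define s where "s = 1 - t"
  have "s \<noteq> 0" using nz by (simp add: s_def)
  have "(1 / t - 1 / (t * R)) - g * - (1 / s - g / (s * R)) - h * - (h / R)
      = (s * R - s + g * t * R - g\<^sup>2 * t + h\<^sup>2 * t * s) / (t * s * R)"
    using nz \<open>s \<noteq> 0\<close> by (simp add: field_simps power2_eq_square)
  also have "s * R - s + g * t * R - g\<^sup>2 * t + h\<^sup>2 * t * s = (s + g * t - R) * R"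
    unfolding g_sq h_sq s_def using R_sq by algebra
  finally show ?thesis using nz \<open>s \<noteq> 0\<close> by (simp add: s_def)
qed

context
  fixes a b :: real
  assumes a: "0 < a" "a < 1" and b: "0 < b" "b < 1"
begin

lemma ln_moment_primitive_args_pos:
  assumes "t \<in> {0..1}"
  shows "0 < 2 + (a + b - 2) * t + 2 * interp_gmean a b t"
    and "0 < 2 * (a * b) + (a + b - 2 * a * b) * (1 - t) + 2 * sqrt (a * b) * interp_gmean a b t"
    and "0 < 2 * sqrt ((1 - a) * (1 - b)) * interp_gmean a b t
             + 2 * ((1 - a) * (1 - b)) * (1 - t) + (a + b - 2 * a * b)"
proof -
  have R: "0 < interp_gmean a b t" using interp_gmean_pos a(1) b(1) assms .
  have "(2 - a - b) * t \<le> 2 - a - b"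
    using assms a b by (intro mult_left_le) auto
  then show "0 < 2 + (a + b - 2) * t + 2 * interp_gmean a b t"
    using R a b by (simp add: algebra_simps)
  have mixed: "0 < a + b - 2 * a * b"
    using mult_strict_left_mono[OF b(2) a(1)] mult_strict_left_mono[OF a(2) b(1)] by (simp add: algebra_simps)
  then show "0 < 2 * (a * b) + (a + b - 2 * a * b) * (1 - t) + 2 * sqrt (a * b) * interp_gmean a b t"
    using R a b assms by (intro add_pos_nonneg) auto
  show "0 < 2 * sqrt ((1 - a) * (1 - b)) * interp_gmean a b t
             + 2 * ((1 - a) * (1 - b)) * (1 - t) + (a + b - 2 * a * b)"
    using R a b assms mixed by (intro add_nonneg_pos add_nonneg_nonneg) auto
qed

lemma has_real_derivative_ln_moment_primitive:
  assumes t: "t \<in> {0<..<1}"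
  shows "(ln_moment_primitive a b has_real_derivative
           (1 - t + sqrt (a * b) * t - interp_gmean a b t) / (t * (1 - t))) (at t)"
proof -
  define R g h where "R = interp_gmean a b t" and "g = sqrt (a * b)" and "h = sqrt ((1 - a) * (1 - b))"
  have t01: "t \<in> {0..1}" using t by auto
  note pos = ln_moment_primitive_args_pos[OF t01]
  have gmean_pos: "0 < interp_gmean a b t" using interp_gmean_pos a(1) b(1) t01 .
  then have R_pos: "0 < R" by (simp add: R_def)
  have Q_pos: "0 < 1 + (a + b - 2) * t + ((1 - a) * (1 - b)) * t\<^sup>2"
              "0 < a * b + (a + b - 2 * a * b) * (1 - t) + ((1 - a) * (1 - b)) * (1 - t)\<^sup>2"
    using gmean_pos by (metis interp_gmean_eq_quadratic real_sqrt_gt_0_iff)+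
  have d1: "((\<lambda>t. ln (2 + (a + b - 2) * t + 2 * interp_gmean a b t)) has_real_derivative
      1 / t - 1 / (t * R)) (at t)"
    using has_real_derivative_ln_sqrt_quadratic_recip[of 1 t "a + b - 2" "(1 - a) * (1 - b)"] t Q_pos(1) pos(1)
    by (simp add: interp_gmean_eq_quadratic(1)[symmetric] R_def)
  have d2: "((\<lambda>t. ln (2 * (a * b) + (a + b - 2 * a * b) * (1 - t) + 2 * g * interp_gmean a b t))
      has_real_derivative - (1 / (1 - t) - g / ((1 - t) * R))) (at t)"
    using has_real_derivative_reflect[OF has_real_derivative_ln_sqrt_quadratic_recip[OF _ _ Q_pos(2)
      pos(2)[unfolded interp_gmean_eq_quadratic(2)]]] a b t
    by (simp add: interp_gmean_eq_quadratic(2)[symmetric] R_def g_def)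
  have d3: "((\<lambda>t. ln (2 * h * interp_gmean a b t + 2 * ((1 - a) * (1 - b)) * (1 - t) + (a + b - 2 * a * b)))
      has_real_derivative - (h / R)) (at t)"
    using has_real_derivative_reflect[OF has_real_derivative_ln_sqrt_quadratic[OF _ Q_pos(2)
      pos(3)[unfolded interp_gmean_eq_quadratic(2)]]] a b
    by (simp add: interp_gmean_eq_quadratic(2)[symmetric] R_def h_def)
  have "(ln_moment_primitive a b has_real_derivative
      (1 / t - 1 / (t * R)) - g * - (1 / (1 - t) - g / ((1 - t) * R)) - h * - (h / R)) (at t)"
    unfolding ln_moment_primitive_def[abs_def] g_def[symmetric] h_def[symmetric]
    by (intro DERIV_diff DERIV_cmult d1 d2 d3)
  moreover have "(1 / t - 1 / (t * R)) - g * - (1 / (1 - t) - g / ((1 - t) * R)) - h * - (h / R)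
      = (1 - t + g * t - R) / (t * (1 - t))"
  proof (rule ln_moment_integrand_partial_fractions)
    show "R\<^sup>2 = (1 - t + t * a) * (1 - t + t * b)"
      using interp_pos[OF a(1) t01] interp_pos[OF b(1) t01] by (simp add: R_def interp_gmean_def)
    show "g\<^sup>2 = a * b" "h\<^sup>2 = (1 - a) * (1 - b)"
      using a b by (simp_all add: g_def h_def)
  qed (use t R_pos in auto)
  ultimately show ?thesis by (simp add: R_def g_def)
qed

lemma continuous_on_ln_moment_primitive: "continuous_on {0..1} (ln_moment_primitive a b)"
proof -
  have "continuous_on {0..1} (interp_gmean a b)"
    unfolding interp_gmean_def[abs_def] by (intro continuous_intros)
  then show ?thesis
    unfolding ln_moment_primitive_def[abs_def]
    using ln_moment_primitive_args_pos by (intro continuous_intros) (auto simp: less_imp_neq[symmetric])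
qed

lemma ln_moment_primitive_increment:
  "ln_moment_primitive a b 1 - ln_moment_primitive a b 0 =
     2 * (sigma_plus a b * ln (sigma_plus a b) + sigma_minus a b * ln (sigma_minus a b)
          - sqrt (a * b) * ln (sqrt (a * b)))"
proof -
  define g h sp sm where "g = sqrt (a * b)" and "h = sqrt ((1 - a) * (1 - b))"
    and "sp = sigma_plus a b" and "sm = sigma_minus a b"
  have g_sq: "g\<^sup>2 = a * b" and h_sq: "h\<^sup>2 = (1 - a) * (1 - b)"
    using a b by (simp_all add: g_def h_def)
  have sp_eq: "2 * sp = 1 + g + h" and sm_eq: "2 * sm = 1 + g - h"
    by (simp_all add: sp_def sm_def g_def h_def sigma_plus_def sigma_minus_def)
  have g_pos: "0 < g" and g_lt1: "g < 1" and h_pos: "0 < h" and h_lt1: "h < 1"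
    using a b mult_strict_mono[of a 1 b 1] mult_strict_mono[of "1 - a" 1 "1 - b" 1]
    by (auto simp: g_def h_def)
  have sp_pos: "0 < sp" and sm_pos: "0 < sm" and k_pos: "0 < 1 + h - g"
    using g_pos h_pos g_lt1 h_lt1 sp_eq sm_eq by auto
  have "interp_gmean a b 1 = g" "interp_gmean a b 0 = 1"
    by (simp_all add: interp_gmean_def g_def)
  then have F1: "ln_moment_primitive a b 1 = ln (2 + (a + b - 2) + 2 * g) - g * ln (2 * (a * b) + 2 * g * g)
                   - h * ln (2 * h * g + (a + b - 2 * a * b))"
    and F0: "ln_moment_primitive a b 0 = ln 4 - g * ln (2 * (a * b) + (a + b - 2 * a * b) + 2 * g)
                   - h * ln (2 * h + 2 * ((1 - a) * (1 - b)) + (a + b - 2 * a * b))"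
    by (simp_all add: ln_moment_primitive_def g_def h_def)
  have ids: "2 + (a + b - 2) + 2 * g = (2 * sp) * (2 * sm)"
       "2 * (a * b) + (a + b - 2 * a * b) + 2 * g = (2 * sp) * (2 * sm)"
       "2 * (a * b) + 2 * g * g = (2 * g) * (2 * g)"
       "2 * h * g + (a + b - 2 * a * b) = (2 * sm) * (1 + h - g)"
       "2 * h + 2 * ((1 - a) * (1 - b)) + (a + b - 2 * a * b) = (2 * sp) * (1 + h - g)"
    by (simp_all only: sp_eq sm_eq) (use g_sq h_sq in algebra)+
  have ln4: "ln 4 = 2 * ln (2::real)"
    using ln_realpow[of 2 2] by simp
  have "ln_moment_primitive a b 1 - ln_moment_primitive a b 0
      = (1 + g + h) * ln sp + (1 + g - h) * ln sm - 2 * g * ln g"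
    unfolding F1 F0 ids using sp_pos sm_pos g_pos k_pos
    by (simp add: ln_mult ln4) (simp add: algebra_simps)
  also have "\<dots> = 2 * (sp * ln sp + sm * ln sm - g * ln g)"
    unfolding sp_eq[symmetric] sm_eq[symmetric] by (simp add: algebra_simps)
  finally show ?thesis by (simp add: g_def sp_def sm_def)
qed

lemma has_integral_interp_gmean_defect:
  "((\<lambda>t. (1 - t + sqrt (a * b) * t - interp_gmean a b t) / (t * (1 - t))) has_integral
     2 * (sigma_plus a b * ln (sigma_plus a b) + sigma_minus a b * ln (sigma_minus a b)
          - sqrt (a * b) * ln (sqrt (a * b)))) {0..1}"
  unfolding ln_moment_primitive_increment[symmetric]
  using continuous_on_ln_moment_primitive has_real_derivative_ln_moment_primitive
  by (intro fundamental_theorem_of_calculus_interior)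
     (auto simp: has_real_derivative_iff_has_vector_derivative[symmetric])

end

lemma has_real_derivative_arcsin_affine:
  fixes a b x :: real
  assumes "a < x" "x < b"
  shows "((\<lambda>x. arcsin ((2 * x - a - b) / (b - a))) has_real_derivative 1 / sqrt ((x - a) * (b - x))) (at x)"
proof -
  define y s where "y = (2 * x - a - b) / (b - a)" and "s = sqrt ((x - a) * (b - x))"
  have s_pos: "0 < s" and s_sq: "s\<^sup>2 = (x - a) * (b - x)"
    using assms by (simp_all add: s_def)
  have sq: "1 - y\<^sup>2 = (2 * s / (b - a))\<^sup>2"
    using assms s_sq by (simp add: y_def power_divide field_simps) (simp add: power2_eq_square algebra_simps)
  then have root: "sqrt (1 - y\<^sup>2) = 2 * s / (b - a)"
    using s_pos assms by simp
  have "0 < (2 * s / (b - a))\<^sup>2" using s_pos assms by simp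
  then have "y\<^sup>2 < 1" using sq by linarith
  then have y_bounds: "-1 < y" "y < 1" by (simp_all add: abs_square_less_1 abs_less_iff)
  have "((\<lambda>x. arcsin ((2 * x - a - b) / (b - a))) has_real_derivative
      inverse (sqrt (1 - y\<^sup>2)) * (2 / (b - a))) (at x)"
    unfolding y_def
    by (rule DERIV_chain2[OF DERIV_arcsin])
       (use y_bounds assms in \<open>auto simp: y_def intro!: derivative_eq_intros\<close>,
        simp add: divide_simps)
  moreover have "inverse (sqrt (1 - y\<^sup>2)) * (2 / (b - a)) = 1 / s"
    using root s_pos assms by (simp add: divide_simps)
  ultimately show ?thesis by (simp add: s_def)
qed

lemma has_real_derivative_arcsin_reciprocal:
  fixes a b p x :: real
  assumes "p < a" "a < x" "x < b"
  shows "((\<lambda>x. arcsin ((2 * (a - p) * (b - p) / (x - p) - (a + b - 2 * p)) / (b - a))) has_real_derivative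
           - sqrt ((a - p) * (b - p)) / ((x - p) * sqrt ((x - a) * (b - x)))) (at x)"
proof -
  define y s q where "y = (2 * (a - p) * (b - p) / (x - p) - (a + b - 2 * p)) / (b - a)"
    and "s = sqrt ((x - a) * (b - x))" and "q = sqrt ((a - p) * (b - p))"
  have s_pos: "0 < s" and s_sq: "s\<^sup>2 = (x - a) * (b - x)"
    and q_pos: "0 < q" and q_sq: "q\<^sup>2 = (a - p) * (b - p)"
    using assms by (simp_all add: s_def q_def)
  have xp: "0 < x - p" "0 < b - a" using assms by auto
  have sq: "1 - y\<^sup>2 = (2 * q * s / ((x - p) * (b - a)))\<^sup>2"
  proof -
    define N D where "N = 2 * (a - p) * (b - p) - (a + b - 2 * p) * (x - p)" and "D = (x - p) * (b - a)"
    have D_nz: "D \<noteq> 0" using xp by (simp add: D_def)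
    have y_eq: "y = N / D" using xp by (simp add: y_def N_def D_def field_simps)
    have "1 - y\<^sup>2 = (D\<^sup>2 - N\<^sup>2) / D\<^sup>2"
      unfolding y_eq using D_nz by (simp add: power_divide field_simps)
    also have "D\<^sup>2 - N\<^sup>2 = 4 * q\<^sup>2 * s\<^sup>2"
      unfolding q_sq s_sq N_def D_def by (simp add: power2_eq_square algebra_simps)
    finally show ?thesis by (simp add: D_def power_divide power_mult_distrib)
  qed
  then have root: "sqrt (1 - y\<^sup>2) = 2 * q * s / ((x - p) * (b - a))"
    using s_pos q_pos xp by simp
  have "0 < (2 * q * s / ((x - p) * (b - a)))\<^sup>2" using s_pos q_pos xp by simp
  then have "y\<^sup>2 < 1" using sq by linarith
  then have y_bounds: "-1 < y" "y < 1" by (simp_all add: abs_square_less_1 abs_less_iff)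
  have "((\<lambda>x. arcsin ((2 * (a - p) * (b - p) / (x - p) - (a + b - 2 * p)) / (b - a))) has_real_derivative
      inverse (sqrt (1 - y\<^sup>2)) * ((- (2 * (a - p) * (b - p)) / (x - p)\<^sup>2) / (b - a))) (at x)"
    unfolding y_def
    by (rule DERIV_chain2[OF DERIV_arcsin])
       (use y_bounds xp in \<open>auto simp: y_def intro!: derivative_eq_intros\<close>,
        simp add: divide_simps power2_eq_square)
  moreover have "inverse (sqrt (1 - y\<^sup>2)) * ((- (2 * (a - p) * (b - p)) / (x - p)\<^sup>2) / (b - a))
      = - q / ((x - p) * s)"
  proof -
    have "2 * (a - p) * (b - p) = 2 * q\<^sup>2" using q_sq by simp
    then show ?thesis
      unfolding root using s_pos q_pos xp by (simp add: divide_simps power2_eq_square)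
  qed
  ultimately show ?thesis by (simp add: s_def q_def)
qed

definition stieltjes_semicircle_primitive :: "real \<Rightarrow> real \<Rightarrow> real \<Rightarrow> real \<Rightarrow> real" where
  "stieltjes_semicircle_primitive a b p x =
     sqrt ((x - a) * (b - x)) + ((a + b) / 2 - p) * arcsin ((2 * x - a - b) / (b - a))
     + sqrt ((a - p) * (b - p)) * arcsin ((2 * (a - p) * (b - p) / (x - p) - (a + b - 2 * p)) / (b - a))"

lemma has_real_derivative_stieltjes_semicircle_primitive:
  fixes a b p x :: real
  assumes p: "p < a" and x: "a < x" "x < b"
  shows "(stieltjes_semicircle_primitive a b p has_real_derivative sqrt ((x - a) * (b - x)) / (x - p)) (at x)"
proof -
  define s q where "s = sqrt ((x - a) * (b - x))" and "q = sqrt ((a - p) * (b - p))"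
  have "0 < (x - a) * (b - x)" using x by simp
  then have s_pos: "0 < s" and s_sq: "s\<^sup>2 = (x - a) * (b - x)" by (simp_all add: s_def)
  have q_sq: "q\<^sup>2 = (a - p) * (b - p)" using p x by (simp add: q_def)
  have "((\<lambda>x. sqrt ((x - a) * (b - x))) has_real_derivative (a + b - 2 * x) / (2 * s)) (at x)"
    using \<open>0 < (x - a) * (b - x)\<close> by (auto intro!: derivative_eq_intros simp: s_def divide_simps)
  then have "(stieltjes_semicircle_primitive a b p has_real_derivative
      (a + b - 2 * x) / (2 * s) + ((a + b) / 2 - p) * (1 / s) + q * (- q / ((x - p) * s))) (at x)"
    unfolding stieltjes_semicircle_primitive_def[abs_def] s_def q_def
    by (intro DERIV_add DERIV_cmult has_real_derivative_arcsin_affine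
        has_real_derivative_arcsin_reciprocal x p)
  moreover have "(a + b - 2 * x) / (2 * s) + ((a + b) / 2 - p) * (1 / s) + q * (- q / ((x - p) * s))
      = s / (x - p)"
  proof -
    have nz: "x - p \<noteq> 0" "s \<noteq> 0" using x p s_pos by auto
    have "(a + b - 2 * x) / (2 * s) + ((a + b) / 2 - p) * (1 / s) + q * (- q / ((x - p) * s))
        = ((a + b - 2 * x) * (x - p) + (a + b - 2 * p) * (x - p) - 2 * q\<^sup>2) / (2 * s * (x - p))"
      using nz by (simp add: field_simps power2_eq_square)
    also have "(a + b - 2 * x) * (x - p) + (a + b - 2 * p) * (x - p) - 2 * q\<^sup>2 = 2 * s\<^sup>2"
      unfolding q_sq s_sq by (simp add: algebra_simps)
    finally show ?thesis using nz by (simp add: power2_eq_square)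
  qed
  ultimately show ?thesis by (simp add: s_def)
qed

lemma stieltjes_semicircle_has_integral:
  fixes a b p :: real
  assumes p: "p < a" and ab: "a < b"
  shows "((\<lambda>x. sqrt ((x - a) * (b - x)) / (x - p)) has_integral
           pi * ((a + b) / 2 - p - sqrt ((a - p) * (b - p)))) {a..b}"
proof -
  define P where "P = stieltjes_semicircle_primitive a b p"
  have "-1 \<le> (2 * x - a - b) / (b - a) \<and> (2 * x - a - b) / (b - a) \<le> 1" if "x \<in> {a..b}" for x
    using that ab by (auto simp: divide_simps)
  moreover have "-1 \<le> (2 * (a - p) * (b - p) / (x - p) - (a + b - 2 * p)) / (b - a)
      \<and> (2 * (a - p) * (b - p) / (x - p) - (a + b - 2 * p)) / (b - a) \<le> 1" if "x \<in> {a..b}" for x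
  proof -
    have x: "a \<le> x" "x \<le> b" using that by auto
    have "(a - p) * (b - p) \<le> (x - p) * (b - p)" "(x - p) * (a - p) \<le> (b - p) * (a - p)"
      using x p ab by (intro mult_right_mono; simp)+
    then show ?thesis using x p ab by (auto simp: divide_simps algebra_simps)
  qed
  ultimately have "continuous_on {a..b} P"
    unfolding P_def stieltjes_semicircle_primitive_def[abs_def] using p ab
    by (auto intro!: continuous_intros)
  then have "((\<lambda>x. sqrt ((x - a) * (b - x)) / (x - p)) has_integral P b - P a) {a..b}"
    using ab p has_real_derivative_stieltjes_semicircle_primitive[of p a _ b]
    by (intro fundamental_theorem_of_calculus_interior)
       (auto simp: P_def has_real_derivative_iff_has_vector_derivative[symmetric])
  moreover have ends: "(2 * b - a - b) / (b - a) = 1" "(2 * a - a - b) / (b - a) = -1"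
    "(2 * (a - p) * (b - p) / (b - p) - (a + b - 2 * p)) / (b - a) = -1"
    "(2 * (a - p) * (b - p) / (a - p) - (a + b - 2 * p)) / (b - a) = 1"
    using ab p by (simp_all add: divide_simps) (simp add: algebra_simps)
  then have "P b - P a = pi * ((a + b) / 2 - p - sqrt ((a - p) * (b - p)))"
    unfolding P_def stieltjes_semicircle_primitive_def ends by (simp add: algebra_simps)
  ultimately show ?thesis by simp
qed

lemma has_integral_inverse_interp:
  fixes x :: real
  assumes "0 < x" "x \<noteq> 1"
  shows "((\<lambda>t. 1 / (1 - t + t * x)) has_integral ln x / (x - 1)) {0..1}"
proof -
  have pos: "0 < 1 - t + t * x" if "t \<in> {0..1}" for t
    using interp_pos[OF assms(1) that] .
  have "((\<lambda>t. 1 / (1 - t + t * x)) has_integral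
      ln (1 - 1 + 1 * x) / (x - 1) - ln (1 - 0 + 0 * x) / (x - 1)) {0..1}"
  proof (rule fundamental_theorem_of_calculus_interior)
    show "continuous_on {0..1} (\<lambda>t. ln (1 - t + t * x) / (x - 1))"
      using pos assms(2) by (intro continuous_intros) (auto simp: less_imp_neq[symmetric])
    fix t :: real
    assume "t \<in> {0<..<1}"
    then have "0 < 1 - t + t * x" using pos by auto
    then have "((\<lambda>t. ln (1 - t + t * x) / (x - 1)) has_real_derivative
        (x - 1) / (1 - t + t * x) / (x - 1)) (at t)"
      by (auto intro!: derivative_eq_intros)
    then have "((\<lambda>t. ln (1 - t + t * x) / (x - 1)) has_real_derivative 1 / (1 - t + t * x)) (at t)"
      using assms(2) by simp
    then show "((\<lambda>t. ln (1 - t + t * x) / (x - 1)) has_vector_derivative 1 / (1 - t + t * x)) (at t)"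
      by (simp add: has_real_derivative_iff_has_vector_derivative)
  qed simp
  then show ?thesis by simp
qed

lemma ln_eq_neg_integral_inverse_interp:
  fixes x c :: real
  assumes "0 < x" "x \<noteq> 1"
  shows "c / (x * (1 - x)) * ln x = - integral {0..1} (\<lambda>t. c / (x * (1 - t + t * x)))"
proof -
  have "((\<lambda>t. c / x * (1 / (1 - t + t * x))) has_integral c / x * (ln x / (x - 1))) {0..1}"
    using assms by (intro has_integral_mult_right has_integral_inverse_interp)
  moreover have "c / x * (ln x / (x - 1)) = - (c / (x * (1 - x)) * ln x)"
    using assms by (simp add: field_simps)
  ultimately show ?thesis by (simp add: integral_unique)
qed

lemma has_integral_semicircle_kernel:
  fixes a b t :: real
  assumes a: "0 < a" and ab: "a < b" and t: "t \<in> {0<..<1}"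
  shows "((\<lambda>x. sqrt ((x - a) * (b - x)) / (x * (1 - t + t * x))) has_integral
           - pi * ((1 - t + sqrt (a * b) * t - interp_gmean a b t) / (t * (1 - t)))) {a..b}"
proof -
  define p where "p = - (1 - t) / t"
  \<comment> \<open>1 / (x (1 - t + t x)) = (1 / x - 1 / (x - p)) / (1 - t)\<close>
  have t0: "0 < t" "t < 1" using t by auto
  have "p < 0" using t0 by (simp add: p_def divide_neg_pos)
  then have pa: "p < a" using a by simp
  have stieltjes_diff:
    "((\<lambda>x. (sqrt ((x - a) * (b - x)) / (x - 0) - sqrt ((x - a) * (b - x)) / (x - p)) / (1 - t))
      has_integral (pi * ((a + b) / 2 - 0 - sqrt ((a - 0) * (b - 0)))
                    - pi * ((a + b) / 2 - p - sqrt ((a - p) * (b - p)))) / (1 - t)) {a..b}"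
    by (intro has_integral_divide has_integral_diff stieltjes_semicircle_has_integral pa ab a)
  have integrand_eq: "(sqrt ((x - a) * (b - x)) / (x - 0) - sqrt ((x - a) * (b - x)) / (x - p)) / (1 - t)
      = sqrt ((x - a) * (b - x)) / (x * (1 - t + t * x))" if "x \<in> {a..b}" for x
  proof -
    have "0 < x" using that a by simp
    then have nz: "x \<noteq> 0" "1 - t + t * x \<noteq> 0" "1 - t \<noteq> 0" "t \<noteq> 0"
      using interp_pos[of x t] t0 by auto
    have xp: "x - p = (1 - t + t * x) / t" using t0 by (simp add: p_def field_simps)
    have "S / (x - 0) - S / (x - p) = (1 - t) * (S / (x * (1 - t + t * x)))" for S
      unfolding xp using nz by (simp add: field_simps)
    then show ?thesis using nz by simp
  qed
  have "sqrt ((a - p) * (b - p)) = interp_gmean a b t / t"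
  proof -
    have "(a - p) * (b - p) = (1 - t + t * a) * (1 - t + t * b) / t\<^sup>2"
      using t0 by (simp add: p_def field_simps power2_eq_square)
    then show ?thesis using t0 by (simp add: interp_gmean_def real_sqrt_divide)
  qed
  then have value_eq: "(pi * ((a + b) / 2 - 0 - sqrt ((a - 0) * (b - 0)))
              - pi * ((a + b) / 2 - p - sqrt ((a - p) * (b - p)))) / (1 - t)
      = - pi * ((1 - t + sqrt (a * b) * t - interp_gmean a b t) / (t * (1 - t)))"
    using t0 by (simp add: p_def field_simps)
  show ?thesis
    using integrand_eq stieltjes_diff unfolding value_eq by (rule has_integral_eq)
qed

lemma integral_semicircle_ln:
  fixes a b :: real
  assumes a: "0 < a" and ab: "a < b" and b: "b < 1"
  shows "integral {a..b} (\<lambda>x. sqrt ((x - a) * (b - x)) / (x * (1 - x)) * ln x) =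
           2 * pi * (sigma_plus a b * ln (sigma_plus a b) + sigma_minus a b * ln (sigma_minus a b)
                     - sqrt (a * b) * ln (sqrt (a * b)))"
proof -
  define k where "k x t = sqrt ((x - a) * (b - x)) / (x * (1 - t + t * x))" for x t :: real
  define D where "D t = (1 - t + sqrt (a * b) * t - interp_gmean a b t) / (t * (1 - t))" for t
  have ln_eq: "sqrt ((x - a) * (b - x)) / (x * (1 - x)) * ln x = - integral {0..1} (k x)"
    if "x \<in> {a..b}" for x
    using ln_eq_neg_integral_inverse_interp[of x "sqrt ((x - a) * (b - x))"] that a b
    by (simp add: k_def[abs_def])
  have "continuous_on (cbox (a, 0) (b, 1)) (\<lambda>(x, t). k x t)"
  proof -
    have "x \<noteq> 0 \<and> 1 - t + t * x \<noteq> 0" if "(x, t) \<in> cbox (a, 0) (b, 1)" for x t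
      using that a interp_pos[of x t] by (auto simp: cbox_Pair_eq)
    then show ?thesis
      unfolding k_def split_beta by (intro continuous_intros) auto
  qed
  then have swap: "integral {a..b} (\<lambda>x. integral {0..1} (k x))
      = integral {0..1} (\<lambda>t. integral {a..b} (\<lambda>x. k x t))"
    using integral_swap_continuous[of a 0 b 1 k] by simp
  have inner: "integral {a..b} (\<lambda>x. k x t) = - pi * D t" if "t \<in> {0..1} - {0, 1}" for t
    using has_integral_semicircle_kernel[OF a ab, of t] that by (auto simp: k_def D_def integral_unique)
  have outer: "integral {0..1} (\<lambda>t. - pi * D t) = - pi * (2 * (sigma_plus a b * ln (sigma_plus a b)
      + sigma_minus a b * ln (sigma_minus a b) - sqrt (a * b) * ln (sqrt (a * b))))"
    unfolding D_def using a ab b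
    by (intro integral_unique has_integral_mult_right has_integral_interp_gmean_defect) auto
  have "integral {a..b} (\<lambda>x. sqrt ((x - a) * (b - x)) / (x * (1 - x)) * ln x)
      = integral {a..b} (\<lambda>x. - integral {0..1} (k x))"
    by (rule integral_cong) (rule ln_eq)
  also have "\<dots> = - integral {a..b} (\<lambda>x. integral {0..1} (k x))"
    by (rule integral_neg)
  also have "\<dots> = - integral {0..1} (\<lambda>t. - pi * D t)"
    unfolding swap using inner by (subst integral_spike[of "{0, 1}"]) auto
  finally show ?thesis unfolding outer by simp
qed

lemma sigma_plus_less_one:
  fixes a b :: real
  assumes "0 \<le> a" "a < b" "b \<le> 1"
  shows "sigma_plus a b < 1"
proof -
  define g h u v where "g = sqrt (a * b)" and "h = sqrt ((1 - a) * (1 - b))"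
    and "u = a * (1 - b)" and "v = b * (1 - a)"
  have g_sq: "g\<^sup>2 = a * b" and h_sq: "h\<^sup>2 = (1 - a) * (1 - b)" and "0 \<le> g" "0 \<le> h"
    using assms by (simp_all add: g_def h_def)
  have u: "0 \<le> u" and v: "0 \<le> v" using assms by (simp_all add: u_def v_def)
  have "u \<noteq> v" using assms by (simp add: u_def v_def algebra_simps)
  then have "0 < (sqrt u - sqrt v)\<^sup>2" using u v by simp
  then have "2 * (sqrt u * sqrt v) < u + v" using u v by (simp add: power2_diff)
  moreover have "g * h = sqrt u * sqrt v"
    by (simp add: g_def h_def u_def v_def real_sqrt_mult[symmetric] algebra_simps)
  ultimately have "(g + h)\<^sup>2 < 1\<^sup>2"
    unfolding power2_sum g_sq h_sq by (simp add: u_def v_def algebra_simps)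
  then have "g + h < 1" by (rule power2_less_imp_less) simp
  then show ?thesis by (simp add: sigma_plus_def g_def h_def)
qed

lemma mckay_const_eq: "mckay_const a b = 1 / (1 - sigma_plus a b)"
  unfolding mckay_const_def sigma_plus_def by (rule arg_cong[where f = "\<lambda>x. 1 / x"]) (simp add: field_simps)

lemma sigma_plus_add_sigma_minus: "sigma_plus a b + sigma_minus a b - 1 = sqrt (a * b)"
  by (simp add: sigma_plus_def sigma_minus_def field_simps)

lemma integral_mckay:
  fixes f :: "real \<Rightarrow> real"
  assumes "0 < am" "am < ap" "ap < 1"
    and f: "f \<in> borel_measurable borel" "continuous_on {am..ap} f"
  shows "(\<integral>x. f x \<partial>mckay am ap) =
           mckay_const am ap / (2 * pi) * integral {am..ap} (\<lambda>x. sqrt ((x - am) * (ap - x)) / (x * (1 - x)) * f x)"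
proof -
  define c w where "c = mckay_const am ap / (2 * pi)" and "w x = sqrt ((x - am) * (ap - x)) / (x * (1 - x))" for x
  have dens: "mckay_density am ap x = c * (indicator {am..ap} x * w x)" for x
    by (simp add: mckay_density_def c_def w_def mult_ac)
  have "0 < c"
    using sigma_plus_less_one[of am ap] assms by (simp add: c_def mckay_const_eq)
  moreover have "0 \<le> w x" if "x \<in> {am..ap}" for x
    using that assms by (auto simp: w_def intro!: divide_nonneg_pos)
  ultimately have nonneg: "0 \<le> mckay_density am ap x" for x
    by (simp add: dens indicator_def)
  have "continuous_on {am..ap} (\<lambda>x. w x * f x)"
    unfolding w_def using assms by (intro continuous_intros f(2)) auto
  then have "set_integrable lborel {am..ap} (\<lambda>x. w x * f x)"
    unfolding set_integrable_def by (rule borel_integrable_compact[OF compact_Icc])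
  then have set_integral: "(LINT x:{am..ap}|lborel. w x * f x) = integral {am..ap} (\<lambda>x. w x * f x)"
    by (rule set_borel_integral_eq_integral)
  have "(\<integral>x. f x \<partial>mckay am ap) = (\<integral>x. mckay_density am ap x * f x \<partial>lborel)"
  proof -
    have "mckay_density am ap \<in> borel_measurable lborel"
      unfolding mckay_density_def[abs_def] by measurable
    moreover have "f \<in> borel_measurable lborel" using f(1) by simp
    ultimately show ?thesis
      unfolding mckay_def using nonneg by (simp add: integral_density)
  qed
  also have "\<dots> = (\<integral>x. c * (indicator {am..ap} x *\<^sub>R (w x * f x)) \<partial>lborel)"
    by (simp add: dens mult.assoc)
  also have "\<dots> = c * (LINT x:{am..ap}|lborel. w x * f x)"
    by (simp add: set_lebesgue_integral_def)
  also have "\<dots> = c * integral {am..ap} (\<lambda>x. w x * f x)"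
    by (simp only: set_integral)
  finally show ?thesis
    by (simp only: c_def w_def)
qed

theorem proposition4p2:
  fixes am ap :: real
  assumes "0 < am" "am < ap" "ap < 1"
  shows "(\<integral>x. ln x \<partial>mckay am ap) =
    (let sp = sigma_plus am ap; sm = sigma_minus am ap in
      (sp * ln sp + sm * ln sm - (sp + sm - 1) * ln (sp + sm - 1)) / (1 - sp))"
proof -
  have "continuous_on {am..ap} ln"
    using assms by (intro continuous_on_ln continuous_on_id) auto
  then have "(\<integral>x. ln x \<partial>mckay am ap) =
      mckay_const am ap / (2 * pi) * integral {am..ap} (\<lambda>x. sqrt ((x - am) * (ap - x)) / (x * (1 - x)) * ln x)"
    by (intro integral_mckay assms) measurable
  also have "\<dots> = mckay_const am ap / (2 * pi) *
      (2 * pi * (sigma_plus am ap * ln (sigma_plus am ap) + sigma_minus am ap * ln (sigma_minus am ap)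
                 - sqrt (am * ap) * ln (sqrt (am * ap))))"
    by (simp only: integral_semicircle_ln[OF assms])
  also have "\<dots> = (sigma_plus am ap * ln (sigma_plus am ap) + sigma_minus am ap * ln (sigma_minus am ap)
                 - sqrt (am * ap) * ln (sqrt (am * ap))) / (1 - sigma_plus am ap)"
  proof -
    have "1 / s / (2 * pi) * (2 * pi * X) = X / s" for s X :: real
      by simp
    then show ?thesis unfolding mckay_const_eq .
  qed
  finally show ?thesis
    by (simp only: Let_def sigma_plus_add_sigma_minus)
qed

end
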